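(* $\bigcup_k\mathfrak{L}(\mathrm{rtDBVA}(k))=\mathsf{S}^=_{\mathbb{Q}}$.
   Context: $\mathfrak{L}(A)$ denotes the class of languages recognized by machines of type $A$; the union ranges over $k\ge1$. A real-time deterministic blind vector automaton of dimension $k$ ($\mathrm{rtDBVA}(k)$) is a 6-tuple $(Q,\Sigma,\delta,q_0,Q_a,v)$ with finite state set $Q$, initial state $q_0$, accept states $Q_a$, initial row vector $v\in\mathbb{Q}^k$ (freely chosen), and $\delta:Q\times(\Sigma\cup\{\cent,\$\})\to Q\times S$, $S$ the set of $k\times k$ rational matrices; the input $w$ is read as $\cent w\$$ left to right, one symbol per step, and $\delta(q,\sigma)=(q',M)$ means that in state $q$ reading $\sigma$ the machine goes to $q'$ and multiplies its row vector on the right by $M$. The input is accepted iff after processing $\$$ the state is in $Q_a$ and the first vector entry equals $1$. A Turakainen finite automaton (TuFA) is $\mathcal{G}=(Q,\Sigma,\{A_\sigma\}_{\sigma\in\Sigma},v_0,f)$ where the $A_\sigma$ are $|Q|\times|Q|$ rational matrices, $v_0$ is a rational row vector and $f$ a rational column vector; for $w=w_1\cdots w_n\in\Sigma^*$, $f_{\mathcal{G}}(w)=v_0A_{w_1}\cdots A_{w_n}f$. $\mathsf{S}^=_{\mathbb{Q}}$ is the class of all languages of the form $\{w\in\Sigma^*\mid f_{\mathcal{G}}(w)=\lambda\}$ for some TuFA $\mathcal{G}$ and some $\lambda\in\mathbb{Q}$. *)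

theory Defs
  imports "Jordan_Normal_Form.Matrix"
begin

datatype 'a tsym = Cent | Dollar | Sym 'a

(* States are natural
   numbers (the finite state set Q is explicit); the vector is a 1 x k
   rational row matrix; delta q s = (q', M) means go to q' and multiply the
   row vector on the right by M. *)
record 'a rtdbva =
  st :: "nat set"
  delta :: "nat \<Rightarrow> 'a tsym \<Rightarrow> nat \<times> rat mat"
  init :: nat
  acc :: "nat set"
  vinit :: "rat mat"

definition is_rtDBVA :: "'a set \<Rightarrow> nat \<Rightarrow> 'a rtdbva \<Rightarrow> bool" where
  "is_rtDBVA \<Sigma> k M \<longleftrightarrow>
     finite (st M) \<and> init M \<in> st M \<and> acc M \<subseteq> st M \<and>
     vinit M \<in> carrier_mat 1 k \<and>
     (\<forall>q \<in> st M. \<forall>s \<in> Sym ` \<Sigma> \<union> {Cent, Dollar}.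
        fst (delta M q s) \<in> st M \<and> snd (delta M q s) \<in> carrier_mat k k)"

definition dbva_step :: "'a rtdbva \<Rightarrow> nat \<times> rat mat \<Rightarrow> 'a tsym \<Rightarrow> nat \<times> rat mat" where
  "dbva_step M c s = (case delta M (fst c) s of (q', A) \<Rightarrow> (q', snd c * A))"

definition dbva_run :: "'a rtdbva \<Rightarrow> 'a list \<Rightarrow> nat \<times> rat mat" where
  "dbva_run M w = foldl (dbva_step M) (init M, vinit M) ([Cent] @ map Sym w @ [Dollar])"

definition dbva_lang :: "'a set \<Rightarrow> 'a rtdbva \<Rightarrow> 'a list set" where
  "dbva_lang \<Sigma> M = {w \<in> lists \<Sigma>.
      fst (dbva_run M w) \<in> acc M \<and> snd (dbva_run M w) $$ (0, 0) = 1}"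

definition rtDBVA_langs :: "'a set \<Rightarrow> 'a list set set" where
  "rtDBVA_langs \<Sigma> = {L. \<exists>k\<ge>1. \<exists>M. is_rtDBVA \<Sigma> k M \<and> L = dbva_lang \<Sigma> M}"

(* Turakainen finite automaton with n = |Q| states: v0 is a 1 x n row vector,
   f an n x 1 column vector, A sigma an n x n matrix. *)
record 'a tufa =
  tdim :: nat
  tmat :: "'a \<Rightarrow> rat mat"
  tv0 :: "rat mat"
  tf :: "rat mat"

definition is_TuFA :: "'a set \<Rightarrow> 'a tufa \<Rightarrow> bool" where
  "is_TuFA \<Sigma> G \<longleftrightarrow>
     tv0 G \<in> carrier_mat 1 (tdim G) \<and> tf G \<in> carrier_mat (tdim G) 1 \<and>
     (\<forall>a \<in> \<Sigma>. tmat G a \<in> carrier_mat (tdim G) (tdim G))"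

definition tufa_fun :: "'a tufa \<Rightarrow> 'a list \<Rightarrow> rat" where
  "tufa_fun G w = (foldl (\<lambda>B a. B * tmat G a) (tv0 G) w * tf G) $$ (0, 0)"

definition S_eq_Q :: "'a set \<Rightarrow> 'a list set set" where
  "S_eq_Q \<Sigma> = {L. \<exists>G c. is_TuFA \<Sigma> G \<and> L = {w \<in> lists \<Sigma>. tufa_fun G w = c}}"

end

theory Submission
  imports Defs
begin

text \<open>
  A Turakainen automaton computing \<open>f\<close> becomes a one-state vector automaton on the
  augmented vector \<open>(1, v\<^sub>0)\<close>: letters act on the second block only, and the right
  endmarker writes \<open>1 - c + x f\<close> into the first entry, which equals \<open>1\<close> iff \<open>x f = c\<close>.
  Conversely, a configuration \<open>(q, v)\<close> of a \<open>k\<close>-dimensional vector automaton is stored as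
  the row vector of length \<open>N k\<close> that carries \<open>v\<close> in block \<open>q\<close> and zeros elsewhere; each
  letter then acts by one fixed block matrix, and the final column evaluates the
  right endmarker, yielding the first entry of the final vector in accepting states
  and \<open>0\<close> otherwise. Hence the value is \<open>1\<close> exactly on the accepted words.
\<close>

lemma index_mult_mat_sum:
  assumes "A \<in> carrier_mat m n" "B \<in> carrier_mat n p" "i < m" "j < p"
  shows "(A * B) $$ (i, j) = (\<Sum>r<n. A $$ (i, r) * B $$ (r, j))"
  using assms by (auto simp: scalar_prod_def lessThan_atLeast0 intro!: sum.cong)

section \<open>From Turakainen automata to vector automata\<close>

definition prepend_one :: "nat \<Rightarrow> rat mat \<Rightarrow> rat mat" where
  "prepend_one n x = mat 1 (Suc n) (\<lambda>(_, j). if j = 0 then 1 else x $$ (0, j - 1))"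

definition one_block_mat :: "nat \<Rightarrow> rat mat \<Rightarrow> rat mat" where
  "one_block_mat n A = mat (Suc n) (Suc n) (\<lambda>(i, j).
     if i = 0 \<and> j = 0 then 1 else if i = 0 \<or> j = 0 then 0 else A $$ (i - 1, j - 1))"

definition threshold_mat :: "nat \<Rightarrow> rat mat \<Rightarrow> rat \<Rightarrow> rat mat" where
  "threshold_mat n f c = mat (Suc n) (Suc n) (\<lambda>(i, j).
     if j = 0 then (if i = 0 then 1 - c else f $$ (i - 1, 0)) else 0)"

lemma prepend_one_carrier [simp]: "prepend_one n x \<in> carrier_mat 1 (Suc n)"
  by (simp add: prepend_one_def)

lemma prepend_one_mult_one_block_mat:
  assumes x: "x \<in> carrier_mat 1 n" and A: "A \<in> carrier_mat n n"
  shows "prepend_one n x * one_block_mat n A = prepend_one n (x * A)"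
proof (rule eq_matI)
  fix i j assume "i < dim_row (prepend_one n (x * A))" "j < dim_col (prepend_one n (x * A))"
  hence ij: "i = 0" "j < Suc n" by (auto simp: prepend_one_def)
  have "(prepend_one n x * one_block_mat n A) $$ (0, j)
      = (\<Sum>r<Suc n. prepend_one n x $$ (0, r) * one_block_mat n A $$ (r, j))"
    by (rule index_mult_mat_sum [where m = 1]) (auto simp: prepend_one_def one_block_mat_def ij)
  also have "\<dots> = prepend_one n x $$ (0, 0) * one_block_mat n A $$ (0, j)
      + (\<Sum>r<n. prepend_one n x $$ (0, Suc r) * one_block_mat n A $$ (Suc r, j))"
    by (simp only: sum.lessThan_Suc_shift)
  also have "\<dots> = prepend_one n (x * A) $$ (0, j)"
  proof (cases j)
    case (Suc j')
    have "(x * A) $$ (0, j') = (\<Sum>r<n. x $$ (0, r) * A $$ (r, j'))"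
      using x A Suc ij by (intro index_mult_mat_sum) auto
    then show ?thesis using ij Suc by (simp add: prepend_one_def one_block_mat_def)
  qed (simp add: prepend_one_def one_block_mat_def)
  finally show "(prepend_one n x * one_block_mat n A) $$ (i, j) = prepend_one n (x * A) $$ (i, j)"
    using ij by simp
qed (simp_all add: prepend_one_def one_block_mat_def)

lemma prepend_one_mult_threshold_mat:
  assumes x: "x \<in> carrier_mat 1 n" and f: "f \<in> carrier_mat n 1"
  shows "(prepend_one n x * threshold_mat n f c) $$ (0, 0) = 1 - c + (x * f) $$ (0, 0)"
proof -
  have "(prepend_one n x * threshold_mat n f c) $$ (0, 0)
      = (\<Sum>r<Suc n. prepend_one n x $$ (0, r) * threshold_mat n f c $$ (r, 0))"
    by (rule index_mult_mat_sum [where m = 1]) (auto simp: prepend_one_def threshold_mat_def)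
  also have "\<dots> = prepend_one n x $$ (0, 0) * threshold_mat n f c $$ (0, 0)
      + (\<Sum>r<n. prepend_one n x $$ (0, Suc r) * threshold_mat n f c $$ (Suc r, 0))"
    by (simp only: sum.lessThan_Suc_shift)
  also have "\<dots> = 1 - c + (\<Sum>r<n. x $$ (0, r) * f $$ (r, 0))"
    by (simp add: prepend_one_def threshold_mat_def)
  also have "(\<Sum>r<n. x $$ (0, r) * f $$ (r, 0)) = (x * f) $$ (0, 0)"
    using x f by (intro index_mult_mat_sum [symmetric]) auto
  finally show ?thesis .
qed

definition tufa_to_rtdbva :: "'a tufa \<Rightarrow> rat \<Rightarrow> 'a rtdbva" where
  "tufa_to_rtdbva G c =
     \<lparr>st = {0},
      delta = (\<lambda>q s. (0, case s of
          Cent \<Rightarrow> 1\<^sub>m (Suc (tdim G))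
        | Dollar \<Rightarrow> threshold_mat (tdim G) (tf G) c
        | Sym a \<Rightarrow> one_block_mat (tdim G) (tmat G a))),
      init = 0, acc = {0}, vinit = prepend_one (tdim G) (tv0 G)\<rparr>"

lemma is_rtDBVA_tufa_to_rtdbva:
  "is_TuFA \<Sigma> G \<Longrightarrow> is_rtDBVA \<Sigma> (Suc (tdim G)) (tufa_to_rtdbva G c)"
  unfolding is_rtDBVA_def tufa_to_rtdbva_def is_TuFA_def
  by (auto simp: prepend_one_def one_block_mat_def threshold_mat_def)

lemma tufa_fold_carrier:
  assumes G: "is_TuFA \<Sigma> G"
  shows "x \<in> carrier_mat 1 (tdim G) \<Longrightarrow> w \<in> lists \<Sigma> \<Longrightarrow>
    foldl (\<lambda>B a. B * tmat G a) x w \<in> carrier_mat 1 (tdim G)"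
proof (induction w arbitrary: x)
  case (Cons a w)
  then have "x * tmat G a \<in> carrier_mat 1 (tdim G)"
    using G unfolding is_TuFA_def by (auto intro!: mult_carrier_mat)
  then show ?case using Cons by simp
qed simp

lemma tufa_to_rtdbva_steps:
  assumes G: "is_TuFA \<Sigma> G"
  shows "x \<in> carrier_mat 1 (tdim G) \<Longrightarrow> w \<in> lists \<Sigma> \<Longrightarrow>
    foldl (dbva_step (tufa_to_rtdbva G c)) (0, prepend_one (tdim G) x) (map Sym w)
      = (0, prepend_one (tdim G) (foldl (\<lambda>B a. B * tmat G a) x w))"
proof (induction w arbitrary: x)
  case (Cons a w)
  have A: "tmat G a \<in> carrier_mat (tdim G) (tdim G)"
    using Cons.prems G unfolding is_TuFA_def by auto
  have "dbva_step (tufa_to_rtdbva G c) (0, prepend_one (tdim G) x) (Sym a)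
      = (0, prepend_one (tdim G) (x * tmat G a))"
    using prepend_one_mult_one_block_mat [OF Cons.prems(1) A]
    by (simp add: dbva_step_def tufa_to_rtdbva_def)
  moreover have "x * tmat G a \<in> carrier_mat 1 (tdim G)"
    using Cons.prems A by auto
  ultimately show ?case using Cons by simp
qed simp

lemma dbva_lang_tufa_to_rtdbva:
  assumes G: "is_TuFA \<Sigma> G"
  shows "dbva_lang \<Sigma> (tufa_to_rtdbva G c) = {w \<in> lists \<Sigma>. tufa_fun G w = c}"
proof -
  let ?n = "tdim G"
  have "w \<in> dbva_lang \<Sigma> (tufa_to_rtdbva G c) \<longleftrightarrow> tufa_fun G w = c" if w: "w \<in> lists \<Sigma>" for w
  proof -
    let ?x = "foldl (\<lambda>B a. B * tmat G a) (tv0 G) w"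
    have v0: "tv0 G \<in> carrier_mat 1 ?n" and f: "tf G \<in> carrier_mat ?n 1"
      using G by (simp_all add: is_TuFA_def)
    have "dbva_step (tufa_to_rtdbva G c) (0, prepend_one ?n (tv0 G)) Cent = (0, prepend_one ?n (tv0 G))"
      by (simp add: dbva_step_def tufa_to_rtdbva_def right_mult_one_mat [OF prepend_one_carrier])
    then have "dbva_run (tufa_to_rtdbva G c) w = (0, prepend_one ?n ?x * threshold_mat ?n (tf G) c)"
      using tufa_to_rtdbva_steps [OF G v0 w, of c]
      by (simp add: dbva_run_def dbva_step_def tufa_to_rtdbva_def)
    then show ?thesis
      using w prepend_one_mult_threshold_mat [OF tufa_fold_carrier [OF G v0 w] f, of c]
      by (simp add: dbva_lang_def tufa_fun_def tufa_to_rtdbva_def)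
  qed
  then show ?thesis by (auto simp: dbva_lang_def)
qed

lemma S_eq_Q_subset_rtDBVA_langs: "S_eq_Q \<Sigma> \<subseteq> rtDBVA_langs \<Sigma>"
proof
  fix L assume "L \<in> S_eq_Q \<Sigma>"
  then obtain G c where G: "is_TuFA \<Sigma> G" and L: "L = {w \<in> lists \<Sigma>. tufa_fun G w = c}"
    unfolding S_eq_Q_def by auto
  show "L \<in> rtDBVA_langs \<Sigma>"
    unfolding rtDBVA_langs_def
    using is_rtDBVA_tufa_to_rtdbva [OF G, of c] dbva_lang_tufa_to_rtdbva [OF G, of c] L
    by (intro CollectI exI [of _ "Suc (tdim G)"] exI [of _ "tufa_to_rtdbva G c"] conjI) simp_all
qed

section \<open>From vector automata to Turakainen automata\<close>

definition wf_config :: "'a rtdbva \<Rightarrow> nat \<Rightarrow> nat \<times> rat mat \<Rightarrow> bool" where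
  "wf_config M k c \<longleftrightarrow> fst c \<in> st M \<and> snd c \<in> carrier_mat 1 k"

lemma dbva_step_eq: "dbva_step M c s = (fst (delta M (fst c) s), snd c * snd (delta M (fst c) s))"
  by (simp add: dbva_step_def split: prod.splits)

lemma wf_config_dbva_step:
  assumes "is_rtDBVA \<Sigma> k M" "wf_config M k c" "s \<in> Sym ` \<Sigma> \<union> {Cent, Dollar}"
  shows "wf_config M k (dbva_step M c s)"
  using assms unfolding is_rtDBVA_def wf_config_def dbva_step_eq by fastforce

lemma wf_config_dbva_steps:
  assumes M: "is_rtDBVA \<Sigma> k M"
  shows "wf_config M k c \<Longrightarrow> w \<in> lists \<Sigma> \<Longrightarrow> wf_config M k (foldl (dbva_step M) c (map Sym w))"
proof (induction w arbitrary: c)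
  case (Cons a w)
  then show ?case using wf_config_dbva_step [OF M, of c "Sym a"] by simp
qed simp

lemma dbva_run_eq:
  "dbva_run M w = dbva_step M (foldl (dbva_step M) (dbva_step M (init M, vinit M) Cent) (map Sym w)) Dollar"
  by (simp add: dbva_run_def)

lemma block_index_less:
  fixes q N j k :: nat
  assumes "q < N" "j < k"
  shows "q * k + j < N * k"
proof -
  have "Suc q * k \<le> N * k" using assms(1) by (intro mult_le_mono1) simp
  then show ?thesis using assms(2) by simp
qed

lemma sum_single_block:
  fixes h :: "nat \<Rightarrow> rat"
  assumes "q < N"
  shows "(\<Sum>r<N * k. if r div k = q then h r else 0) = (\<Sum>i<k. h (q * k + i))"
proof -
  have "{r \<in> {..<N * k}. r div k = q} = (\<lambda>i. q * k + i) ` {..<k}"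
  proof (intro Set.set_eqI iffI)
    fix r assume r: "r \<in> {r \<in> {..<N * k}. r div k = q}"
    then have "0 < k" by (cases "k = 0") simp_all
    then have "r mod k < k" by simp
    moreover have "r = q * k + r mod k" using r div_mult_mod_eq [of r k] by simp
    ultimately show "r \<in> (\<lambda>i. q * k + i) ` {..<k}" by (metis imageI lessThan_iff)
  qed (auto simp: assms block_index_less)
  then have "(\<Sum>r<N * k. if r div k = q then h r else 0) = sum h ((\<lambda>i. q * k + i) ` {..<k})"
    by (simp add: sum.inter_filter [symmetric])
  then show ?thesis by (simp add: sum.reindex inj_on_def)
qed

definition block_row :: "nat \<Rightarrow> nat \<Rightarrow> nat \<times> rat mat \<Rightarrow> rat mat" where
  "block_row k N c = mat 1 (N * k) (\<lambda>(_, r). if r div k = fst c then snd c $$ (0, r mod k) else 0)"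

definition transfer_mat :: "'a rtdbva \<Rightarrow> nat \<Rightarrow> nat \<Rightarrow> 'a \<Rightarrow> rat mat" where
  "transfer_mat M k N a = mat (N * k) (N * k) (\<lambda>(r, s).
     if fst (delta M (r div k) (Sym a)) = s div k
     then snd (delta M (r div k) (Sym a)) $$ (r mod k, s mod k) else 0)"

definition final_col :: "'a rtdbva \<Rightarrow> nat \<Rightarrow> nat \<Rightarrow> rat mat" where
  "final_col M k N = mat (N * k) 1 (\<lambda>(r, _).
     if fst (delta M (r div k) Dollar) \<in> acc M
     then snd (delta M (r div k) Dollar) $$ (r mod k, 0) else 0)"

lemma block_row_carrier [simp]: "block_row k N c \<in> carrier_mat 1 (N * k)"
  by (simp add: block_row_def)

lemma block_row_mult_entry:
  assumes "fst c < N" "B \<in> carrier_mat (N * k) p" "s < p"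
  shows "(block_row k N c * B) $$ (0, s) = (\<Sum>i<k. snd c $$ (0, i) * B $$ (fst c * k + i, s))"
proof -
  have "(block_row k N c * B) $$ (0, s) = (\<Sum>r<N * k. block_row k N c $$ (0, r) * B $$ (r, s))"
    using assms by (intro index_mult_mat_sum [OF block_row_carrier]) auto
  also have "\<dots> = (\<Sum>r<N * k. if r div k = fst c then snd c $$ (0, r mod k) * B $$ (r, s) else 0)"
    by (intro sum.cong) (auto simp: block_row_def)
  also have "\<dots> = (\<Sum>i<k. snd c $$ (0, (fst c * k + i) mod k) * B $$ (fst c * k + i, s))"
    by (rule sum_single_block [OF assms(1)])
  also have "\<dots> = (\<Sum>i<k. snd c $$ (0, i) * B $$ (fst c * k + i, s))"
    by (intro sum.cong) simp_all
  finally show ?thesis .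
qed

lemma block_row_mult_transfer_mat:
  assumes q: "fst c < N" and v: "snd c \<in> carrier_mat 1 k"
    and A: "snd (delta M (fst c) (Sym a)) \<in> carrier_mat k k"
  shows "block_row k N c * transfer_mat M k N a = block_row k N (dbva_step M c (Sym a))"
proof (rule eq_matI)
  let ?q' = "fst (delta M (fst c) (Sym a))" and ?A = "snd (delta M (fst c) (Sym a))"
  fix i s assume "i < dim_row (block_row k N (dbva_step M c (Sym a)))"
    "s < dim_col (block_row k N (dbva_step M c (Sym a)))"
  then have i: "i = 0" and s: "s < N * k" by (auto simp: block_row_def)
  then have smod: "s mod k < k" by (cases "k = 0") auto
  have "(block_row k N c * transfer_mat M k N a) $$ (0, s)
      = (\<Sum>j<k. snd c $$ (0, j) * transfer_mat M k N a $$ (fst c * k + j, s))"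
    using q s by (intro block_row_mult_entry) (auto simp: transfer_mat_def)
  also have "\<dots> = (\<Sum>j<k. snd c $$ (0, j) * (if ?q' = s div k then ?A $$ (j, s mod k) else 0))"
    using q s by (intro sum.cong) (auto simp: transfer_mat_def block_index_less)
  also have "\<dots> = block_row k N (dbva_step M c (Sym a)) $$ (0, s)"
  proof (cases "?q' = s div k")
    case True
    have "(snd c * ?A) $$ (0, s mod k) = (\<Sum>j<k. snd c $$ (0, j) * ?A $$ (j, s mod k))"
      using v A smod by (intro index_mult_mat_sum) auto
    then show ?thesis using True s by (simp add: block_row_def dbva_step_eq)
  qed (use s in \<open>auto simp: block_row_def dbva_step_eq\<close>)
  finally show "(block_row k N c * transfer_mat M k N a) $$ (i, s)
      = block_row k N (dbva_step M c (Sym a)) $$ (i, s)"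
    using i by simp
qed (simp_all add: block_row_def transfer_mat_def)

lemma block_row_mult_final_col:
  assumes q: "fst c < N" and k: "0 < k" and v: "snd c \<in> carrier_mat 1 k"
    and A: "snd (delta M (fst c) Dollar) \<in> carrier_mat k k"
  shows "(block_row k N c * final_col M k N) $$ (0, 0)
    = (if fst (dbva_step M c Dollar) \<in> acc M then snd (dbva_step M c Dollar) $$ (0, 0) else 0)"
proof -
  let ?A = "snd (delta M (fst c) Dollar)"
  have "(block_row k N c * final_col M k N) $$ (0, 0)
      = (\<Sum>j<k. snd c $$ (0, j) * final_col M k N $$ (fst c * k + j, 0))"
    using q by (intro block_row_mult_entry) (auto simp: final_col_def)
  also have "\<dots> = (\<Sum>j<k. snd c $$ (0, j) * (if fst (dbva_step M c Dollar) \<in> acc M then ?A $$ (j, 0) else 0))"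
    using q by (intro sum.cong) (auto simp: final_col_def block_index_less dbva_step_eq)
  also have "\<dots> = (if fst (dbva_step M c Dollar) \<in> acc M then (\<Sum>j<k. snd c $$ (0, j) * ?A $$ (j, 0)) else 0)"
    by simp
  also have "(\<Sum>j<k. snd c $$ (0, j) * ?A $$ (j, 0)) = (snd c * ?A) $$ (0, 0)"
    using v A k by (intro index_mult_mat_sum [where m = 1 and p = k, symmetric]) auto
  finally show ?thesis by (simp add: dbva_step_eq)
qed

definition state_bound :: "'a rtdbva \<Rightarrow> nat" where
  "state_bound M = Suc (Max (st M))"

lemma less_state_bound: "finite (st M) \<Longrightarrow> q \<in> st M \<Longrightarrow> q < state_bound M"
  by (simp add: state_bound_def le_imp_less_Suc)

definition rtdbva_to_tufa :: "'a rtdbva \<Rightarrow> nat \<Rightarrow> 'a tufa" where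
  "rtdbva_to_tufa M k =
     \<lparr>tdim = state_bound M * k,
      tmat = transfer_mat M k (state_bound M),
      tv0 = block_row k (state_bound M) (dbva_step M (init M, vinit M) Cent),
      tf = final_col M k (state_bound M)\<rparr>"

lemma is_TuFA_rtdbva_to_tufa: "is_TuFA \<Sigma> (rtdbva_to_tufa M k)"
  by (simp add: is_TuFA_def rtdbva_to_tufa_def block_row_def transfer_mat_def final_col_def)

lemma wf_config_dims:
  assumes M: "is_rtDBVA \<Sigma> k M" and c: "wf_config M k c"
  shows "fst c < state_bound M" "snd c \<in> carrier_mat 1 k"
    "s \<in> Sym ` \<Sigma> \<union> {Cent, Dollar} \<Longrightarrow> snd (delta M (fst c) s) \<in> carrier_mat k k"
  using assms by (auto simp: is_rtDBVA_def wf_config_def less_state_bound)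

lemma transfer_mat_steps:
  assumes M: "is_rtDBVA \<Sigma> k M"
  shows "wf_config M k c \<Longrightarrow> w \<in> lists \<Sigma> \<Longrightarrow>
    foldl (\<lambda>B a. B * transfer_mat M k (state_bound M) a) (block_row k (state_bound M) c) w
      = block_row k (state_bound M) (foldl (dbva_step M) c (map Sym w))"
proof (induction w arbitrary: c)
  case (Cons a w)
  then have "block_row k (state_bound M) c * transfer_mat M k (state_bound M) a
      = block_row k (state_bound M) (dbva_step M c (Sym a))"
    by (intro block_row_mult_transfer_mat wf_config_dims [OF M]) auto
  then show ?case using Cons wf_config_dbva_step [OF M, of c "Sym a"] by simp
qed simp

lemma tufa_fun_rtdbva_to_tufa:
  assumes M: "is_rtDBVA \<Sigma> k M" and k: "0 < k" and w: "w \<in> lists \<Sigma>"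
  shows "tufa_fun (rtdbva_to_tufa M k) w
    = (if fst (dbva_run M w) \<in> acc M then snd (dbva_run M w) $$ (0, 0) else 0)"
proof -
  define c where "c = foldl (dbva_step M) (dbva_step M (init M, vinit M) Cent) (map Sym w)"
  have "wf_config M k (init M, vinit M)"
    using M by (simp add: is_rtDBVA_def wf_config_def)
  then have cent: "wf_config M k (dbva_step M (init M, vinit M) Cent)"
    using wf_config_dbva_step [OF M] by simp
  then have c: "wf_config M k c"
    unfolding c_def using wf_config_dbva_steps [OF M _ w] by simp
  have "tufa_fun (rtdbva_to_tufa M k) w
      = (block_row k (state_bound M) c * final_col M k (state_bound M)) $$ (0, 0)"
    using transfer_mat_steps [OF M cent w] by (simp add: tufa_fun_def rtdbva_to_tufa_def c_def)
  also have "\<dots> = (if fst (dbva_step M c Dollar) \<in> acc M then snd (dbva_step M c Dollar) $$ (0, 0) else 0)"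
    using wf_config_dims [OF M c] by (intro block_row_mult_final_col k) auto
  finally show ?thesis by (simp add: dbva_run_eq c_def)
qed

text \<open>Rejecting runs evaluate to \<open>0 \<noteq> 1\<close>, so the threshold \<open>1\<close> separates them.\<close>
lemma dbva_lang_eq_tufa_level:
  assumes "is_rtDBVA \<Sigma> k M" "0 < k"
  shows "dbva_lang \<Sigma> M = {w \<in> lists \<Sigma>. tufa_fun (rtdbva_to_tufa M k) w = 1}"
proof -
  have "w \<in> lists \<Sigma> \<and> fst (dbva_run M w) \<in> acc M \<and> snd (dbva_run M w) $$ (0, 0) = 1
      \<longleftrightarrow> w \<in> lists \<Sigma> \<and> tufa_fun (rtdbva_to_tufa M k) w = 1" for w
  proof (cases "w \<in> lists \<Sigma>")
    case True
    show ?thesis using tufa_fun_rtdbva_to_tufa [OF assms True] True by simp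
  qed simp
  then show ?thesis unfolding dbva_lang_def by simp
qed

lemma rtDBVA_langs_subset_S_eq_Q: "rtDBVA_langs \<Sigma> \<subseteq> S_eq_Q \<Sigma>"
proof
  fix L assume "L \<in> rtDBVA_langs \<Sigma>"
  then obtain k M where M: "is_rtDBVA \<Sigma> k M" and "k \<ge> 1" and L: "L = dbva_lang \<Sigma> M"
    unfolding rtDBVA_langs_def by auto
  then have "L = {w \<in> lists \<Sigma>. tufa_fun (rtdbva_to_tufa M k) w = 1}"
    using dbva_lang_eq_tufa_level [OF M] by simp
  then show "L \<in> S_eq_Q \<Sigma>"
    unfolding S_eq_Q_def using is_TuFA_rtdbva_to_tufa [of \<Sigma> M k] by blast
qed

theorem theorem10:
  fixes \<Sigma> :: "'a set"
  assumes "finite \<Sigma>"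
  shows "rtDBVA_langs \<Sigma> = S_eq_Q \<Sigma>"
  using S_eq_Q_subset_rtDBVA_langs rtDBVA_langs_subset_S_eq_Q by blast

end
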